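(* Let $\mathcal{R}=\{z\in\mathbb{C}:\Re(z)>0\}$ and let $\Phi:\mathcal{R}\to\mathbb{C}$ be analytic and satisfy: (a) for all $0<a<b<\infty$, $\lim_{y\to\pm\infty} e^{-\pi|y|}\int_a^b\left|\frac{\Phi(x+iy)}{x+iy}\right|\mathrm{d}x=0$; (b) for every $\eta>0$, $\sup_{x\ge\eta}\int_{-\infty}^\infty\left|\frac{\Phi(x+iy)}{x+iy}\right|e^{-\pi|y|}\,\mathrm{d}y<\infty$; (c) $\lim_{x\to\infty}\int_{-\infty}^\infty\left|\frac{\Phi(x+iy)}{x+iy}\right|e^{-\pi|y|}\,\mathrm{d}y=0$. Let $\delta>0$. Then there exists $c(\delta,\Phi)>0$, depending only on $\delta$ and $\Phi$, such that $|\Phi(z)|\le c(\delta,\Phi)|z|e^{\pi|y|}$ for all $z=x+iy$ with $\Re(z)\ge\delta$. *)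

theory Defs
  imports "HOL-Analysis.Analysis"
begin

end

theory Submission
  imports Defs "HOL-Complex_Analysis.Complex_Analysis"
begin

text \<open>
  Put F(w) = \<Phi>(w)/w and fix z = x + iy with x \<ge> \<delta> and r = \<delta>/2.  Cauchy's integral formula
  for the Gaussian-damped function F(w) exp((w - z)^2) on the rectangle
  [x - r, x + r] \<times> [y - T, y + T] expresses 2\<pi>i F(z) as four side integrals.  On the rectangle
  |exp((w - z)^2)| \<le> exp(r^2) exp(-(Im w - y)^2), and completing the square gives
  exp(-(t - y)^2) \<le> exp(\<pi>^2/4 + \<pi>|y|) exp(-\<pi>|t|).  Hence each side is bounded by
  exp(\<pi>|y|) times a weighted integral of |F| of the kind occurring in the hypotheses.  As T \<rightarrow> \<infinity>
  the horizontal sides vanish by (a), and the vertical sides, on the lines Re w = x \<plusminus> r \<ge> r,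
  are bounded uniformly by (b).
\<close>

definition weighted_vline_norm :: "(complex \<Rightarrow> complex) \<Rightarrow> real \<Rightarrow> ennreal" where
  "weighted_vline_norm F p = (\<integral>\<^sup>+ t. ennreal (norm (F (Complex p t)) * exp (- pi * \<bar>t\<bar>)) \<partial>lborel)"

definition weighted_hseg_norm :: "(complex \<Rightarrow> complex) \<Rightarrow> real \<Rightarrow> real \<Rightarrow> real \<Rightarrow> ennreal" where
  "weighted_hseg_norm F a b t =
     ennreal (exp (- pi * \<bar>t\<bar>)) * (\<integral>\<^sup>+ s \<in> {a..b}. ennreal (norm (F (Complex s t))) \<partial>lborel)"

lemma has_contour_integral_linepath_same_Im_iff:
  assumes "Im z = c" "Im z' = c" "Re z = a" "Re z' = b" "a < b"
  shows   "(f has_contour_integral I) (linepath z z') \<longleftrightarrow>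
             ((\<lambda>x. f (Complex x c)) has_integral I) {a..b}"
proof -
  have "(f has_contour_integral I) (linepath z z') \<longleftrightarrow>
          ((\<lambda>x. f (linepath z z' x) * (z' - z)) has_integral I) {0..1}"
    by (subst has_contour_integral_linepath) simp_all
  also have "\<dots> \<longleftrightarrow> ((\<lambda>x. f (Complex (a + (b - a) * x) c) * of_real (b - a)) has_integral I) {0..1}"
    using assms
    by (intro has_integral_cong arg_cong2[of _ _ _ _ "(*)"] arg_cong[of _ _ f])
       (auto simp: linepath_def complex_eq_iff algebra_simps)
  also have "{0..1} = (\<lambda>x. x / (b - a)) ` {0..b-a}"
    using assms by simp
  also have "((\<lambda>x. f (Complex (a + (b - a) * x) c) * of_real (b - a)) has_integral I) \<dots> \<longleftrightarrow>
             ((\<lambda>x. f (Complex (a + x) c) * of_real (b - a)) has_integral ((b-a) *\<^sub>R I)) {0..b-a}"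
    by (subst has_integral_stretch_real_iff) (use assms in simp_all)
  also have "\<dots> \<longleftrightarrow> ((\<lambda>x. of_real (b-a) * (f (Complex x c))) has_integral (b-a) *\<^sub>R I) {a..b}"
    by (subst has_integral_shift_real_ivl_iff[where c = "-a"])
       (simp_all add: scaleR_conv_of_real mult_ac)
  also have "\<dots> \<longleftrightarrow> ((\<lambda>x. f (Complex x c)) has_integral I) {a..b}"
    by (subst has_integral_mult_right_iff) (use assms in \<open>auto simp: scaleR_conv_of_real\<close>)
  finally show ?thesis .
qed

lemma norm_has_integral_le_cmult_nn_integral:
  fixes g :: "real \<Rightarrow> 'a::banach"
  assumes J: "(g has_integral J) {a..b}" and g: "continuous_on {a..b} g"
    and f: "continuous_on {a..b} f" and K: "0 \<le> K"
    and bound: "\<And>s. s \<in> {a..b} \<Longrightarrow> norm (g s) \<le> K * f s"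
  shows "ennreal (norm J) \<le> ennreal K * (\<integral>\<^sup>+ s \<in> {a..b}. ennreal (f s) \<partial>lborel)"
proof -
  have int: "(\<lambda>s. norm (g s)) integrable_on {a..b}"
    by (intro integrable_continuous_interval continuous_on_norm g)
  have "norm J \<le> integral {a..b} (\<lambda>s. norm (g s))"
    using integral_norm_bound_integral[OF integrable_continuous_interval[OF g] int] J
    by (simp add: integral_unique)
  also have "ennreal \<dots> = (\<integral>\<^sup>+ s \<in> {a..b}. ennreal (norm (g s)) \<partial>lborel)"
    by (rule nn_integral_has_integral_lebesgue'[symmetric, OF _ integrable_integral[OF int]]) simp
  also have "\<dots> \<le> (\<integral>\<^sup>+ s. ennreal K * (ennreal (f s) * indicator {a..b} s) \<partial>lborel)"
    using bound K
    by (intro nn_integral_mono) (auto simp: ennreal_mult'[symmetric] intro!: ennreal_leI split: split_indicator)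
  also have "\<dots> = ennreal K * (\<integral>\<^sup>+ s \<in> {a..b}. ennreal (f s) \<partial>lborel)"
  proof (rule nn_integral_cmult)
    have "(\<lambda>s. indicator {a..b} s *\<^sub>R f s) \<in> borel_measurable borel"
      by (rule borel_measurable_continuous_on_indicator) (auto intro: f)
    then have "(\<lambda>s. ennreal (indicator {a..b} s *\<^sub>R f s)) \<in> borel_measurable lborel"
      by measurable
    then show "(\<lambda>s. ennreal (f s) * indicator {a..b} s) \<in> borel_measurable lborel"
      by (rule measurable_cong[THEN iffD1, rotated]) (auto split: split_indicator)
  qed
  finally show ?thesis by (simp add: ennreal_leI)
qed

lemma exp_neg_square_le:
  fixes s y :: real
  shows "exp (- ((s - y)^2)) \<le> exp (pi^2/4 + pi * \<bar>y\<bar>) * exp (- pi * \<bar>s\<bar>)"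
proof -
  have "0 \<le> (\<bar>s - y\<bar> - pi/2)^2" by simp
  then have "- ((s - y)^2) \<le> pi^2/4 - pi * \<bar>s - y\<bar>"
    by (simp add: power2_eq_square algebra_simps)
  moreover have "pi * \<bar>s\<bar> \<le> pi * \<bar>y\<bar> + pi * \<bar>s - y\<bar>"
    by (simp add: distrib_left[symmetric])
  ultimately have "- ((s - y)^2) \<le> (pi^2/4 + pi * \<bar>y\<bar>) + (- pi * \<bar>s\<bar>)" by linarith
  then show ?thesis by (simp add: exp_add[symmetric])
qed

lemma norm_exp_square_div_le:
  fixes w z :: complex
  assumes re: "\<bar>Re w - Re z\<bar> \<le> r" and d: "0 < d" "d \<le> norm (w - z)"
  shows "norm (exp ((w - z)^2) / (w - z))
           \<le> exp (r^2 + pi^2/4 + pi * \<bar>Im z\<bar>) / d * exp (- pi * \<bar>Im w\<bar>)"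
proof -
  have "(Re w - Re z)^2 \<le> r^2"
    using re by (metis abs_le_square_iff abs_ge_self order_trans power2_abs)
  then have "norm (exp ((w - z)^2)) \<le> exp (r^2) * exp (- ((Im w - Im z)^2))"
    by (simp add: power2_eq_square exp_add[symmetric] algebra_simps)
  also have "\<dots> \<le> exp (r^2) * (exp (pi^2/4 + pi * \<bar>Im z\<bar>) * exp (- pi * \<bar>Im w\<bar>))"
    by (intro mult_left_mono exp_neg_square_le) simp
  finally have num: "norm (exp ((w - z)^2)) \<le> exp (r^2 + pi^2/4 + pi * \<bar>Im z\<bar>) * exp (- pi * \<bar>Im w\<bar>)"
    by (simp add: exp_add mult_ac)
  have "norm (exp ((w - z)^2) / (w - z)) \<le> norm (exp ((w - z)^2)) / d"
    unfolding norm_divide using d by (intro divide_left_mono mult_pos_pos) auto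
  also have "\<dots> \<le> exp (r^2 + pi^2/4 + pi * \<bar>Im z\<bar>) * exp (- pi * \<bar>Im w\<bar>) / d"
    using num d by (simp add: divide_right_mono)
  finally show ?thesis by simp
qed

lemma norm_horizontal_side_le:
  fixes F :: "complex \<Rightarrow> complex"
  assumes contF: "continuous_on {w. 0 < Re w} F" and r: "0 < r" "r < x" and t: "r \<le> \<bar>t - y\<bar>"
    and J: "((\<lambda>s. F (Complex s t) * exp ((Complex s t - Complex x y)^2) / (Complex s t - Complex x y))
              has_integral J) {x - r..x + r}"
  shows "ennreal (norm J)
           \<le> ennreal (exp (r^2 + pi^2/4 + pi * \<bar>y\<bar>) / r) * weighted_hseg_norm F (x - r) (x + r) t"
proof -
  define E where "E = exp (r^2 + pi^2/4 + pi * \<bar>y\<bar>) / r"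
  have contF': "continuous_on {x - r..x + r} (\<lambda>s. F (Complex s t))"
    by (rule continuous_on_compose2[OF contF]) (use r in \<open>auto intro!: continuous_intros\<close>)
  have "Complex s t - Complex x y \<noteq> 0" for s
    using r t by (auto simp: complex_eq_iff)
  then have "ennreal (norm J) \<le> ennreal (E * exp (- pi * \<bar>t\<bar>)) *
               (\<integral>\<^sup>+ s \<in> {x - r..x + r}. ennreal (norm (F (Complex s t))) \<partial>lborel)"
  proof (intro norm_has_integral_le_cmult_nn_integral[OF J] continuous_intros contF' continuous_on_norm)
    fix s assume "s \<in> {x - r..x + r}"
    then have "\<bar>Re (Complex s t) - Re (Complex x y)\<bar> \<le> r" by auto
    moreover have "r \<le> norm (Complex s t - Complex x y)"
      using t abs_Im_le_cmod[of "Complex s t - Complex x y"] by simp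
    ultimately have "norm (exp ((Complex s t - Complex x y)^2) / (Complex s t - Complex x y))
                       \<le> E * exp (- pi * \<bar>t\<bar>)"
      using norm_exp_square_div_le[of "Complex s t" "Complex x y" r r] r by (simp add: E_def)
    then show "norm (F (Complex s t) * exp ((Complex s t - Complex x y)^2) / (Complex s t - Complex x y))
                 \<le> E * exp (- pi * \<bar>t\<bar>) * norm (F (Complex s t))"
      unfolding times_divide_eq_right[symmetric] norm_mult
      by (subst mult.commute) (intro mult_right_mono; simp)
  qed (use r in \<open>auto simp: E_def\<close>)
  also have "ennreal (E * exp (- pi * \<bar>t\<bar>)) = ennreal E * ennreal (exp (- pi * \<bar>t\<bar>))"
    using r by (intro ennreal_mult) (auto simp: E_def)
  finally show ?thesis
    by (simp add: weighted_hseg_norm_def E_def mult.assoc)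
qed

lemma norm_vertical_side_le:
  fixes F :: "complex \<Rightarrow> complex"
  assumes contF: "continuous_on {w. 0 < Re w} F" and p: "0 < p" "\<bar>p - x\<bar> = r" "0 < r"
    and J: "((\<lambda>t. F (Complex p t) * exp ((Complex p t - Complex x y)^2) / (Complex p t - Complex x y))
              has_integral J) {a..b}"
  shows "ennreal (norm J) \<le> ennreal (exp (r^2 + pi^2/4 + pi * \<bar>y\<bar>) / r) * weighted_vline_norm F p"
proof -
  define E where "E = exp (r^2 + pi^2/4 + pi * \<bar>y\<bar>) / r"
  have contF': "continuous_on {a..b} (\<lambda>t. F (Complex p t))"
    by (rule continuous_on_compose2[OF contF]) (use p in \<open>auto intro!: continuous_intros\<close>)
  have "Complex p t - Complex x y \<noteq> 0" for t
    using p by (auto simp: complex_eq_iff)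
  then have "ennreal (norm J) \<le> ennreal E *
               (\<integral>\<^sup>+ t \<in> {a..b}. ennreal (norm (F (Complex p t)) * exp (- pi * \<bar>t\<bar>)) \<partial>lborel)"
  proof (intro norm_has_integral_le_cmult_nn_integral[OF J] continuous_intros contF' continuous_on_norm)
    fix t
    have "r \<le> norm (Complex p t - Complex x y)"
      using p abs_Re_le_cmod[of "Complex p t - Complex x y"] by simp
    then have "norm (exp ((Complex p t - Complex x y)^2) / (Complex p t - Complex x y))
                 \<le> E * exp (- pi * \<bar>t\<bar>)"
      using norm_exp_square_div_le[of "Complex p t" "Complex x y" r r] p by (simp add: E_def)
    then show "norm (F (Complex p t) * exp ((Complex p t - Complex x y)^2) / (Complex p t - Complex x y))
                 \<le> E * (norm (F (Complex p t)) * exp (- pi * \<bar>t\<bar>))"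
      unfolding times_divide_eq_right[symmetric] norm_mult
      by (subst mult.left_commute) (intro mult_left_mono; simp)
  qed (use p in \<open>auto simp: E_def\<close>)
  also have "\<dots> \<le> ennreal E * weighted_vline_norm F p"
    unfolding weighted_vline_norm_def
    by (intro mult_left_mono nn_integral_mono) (auto split: split_indicator)
  finally show ?thesis by (simp add: E_def)
qed

lemma has_contour_integral_rectpath_sides:
  fixes h :: "complex \<Rightarrow> complex"
  assumes I: "(h has_contour_integral I) (rectpath (Complex x0 y0) (Complex x1 y1))"
    and cont: "continuous_on (path_image (rectpath (Complex x0 y0) (Complex x1 y1))) h"
    and xy: "x0 < x1" "y0 < y1"
  obtains I1 I2 I3 I4 where
    "((\<lambda>s. h (Complex s y0)) has_integral I1) {x0..x1}"
    "((\<lambda>t. h (Complex x1 t)) has_integral I2) {y0..y1}"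
    "((\<lambda>s. h (Complex s y1)) has_integral I3) {x0..x1}"
    "((\<lambda>t. h (Complex x0 t)) has_integral I4) {y0..y1}"
    "I = I1 + \<i> * I2 - I3 - \<i> * I4"
proof -
  define a1 a2 a3 a4 where "a1 = Complex x0 y0" and "a2 = Complex x1 y0"
    and "a3 = Complex x1 y1" and "a4 = Complex x0 y1"
  have rp: "rectpath a1 a3 = linepath a1 a2 +++ linepath a2 a3 +++ linepath a3 a4 +++ linepath a4 a1"
    by (simp add: rectpath_def Let_def a1_def a2_def a3_def a4_def)
  have "continuous_on (closed_segment a1 a2) h" "continuous_on (closed_segment a2 a3) h"
    "continuous_on (closed_segment a3 a4) h" "continuous_on (closed_segment a4 a1) h"
    using cont unfolding a1_def[symmetric] a3_def[symmetric] rp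
    by (auto simp: path_image_join intro: continuous_on_subset)
  then obtain C1 C2 C3 C4 where
    C1: "(h has_contour_integral C1) (linepath a1 a2)" and
    C2: "(h has_contour_integral C2) (linepath a2 a3)" and
    C3: "(h has_contour_integral C3) (linepath a3 a4)" and
    C4: "(h has_contour_integral C4) (linepath a4 a1)"
    using contour_integrable_continuous_linepath has_contour_integral_integral by blast
  have "(h has_contour_integral (C1 + (C2 + (C3 + C4)))) (rectpath a1 a3)"
    unfolding rp by (intro has_contour_integral_join C1 C2 C3 C4 valid_path_join) auto
  then have "I = C1 + (C2 + (C3 + C4))"
    using I has_contour_integral_unique by (auto simp: a1_def a3_def)
  moreover have "((\<lambda>s. h (Complex s y0)) has_integral C1) {x0..x1}"
    using C1 has_contour_integral_linepath_same_Im_iff xy by (simp add: a1_def a2_def)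
  moreover have "((\<lambda>t. h (Complex x1 t)) has_integral (- \<i> * C2)) {y0..y1}"
    using C2 has_contour_integral_linepath_same_Re_iff xy by (simp add: a2_def a3_def)
  moreover have "((\<lambda>s. h (Complex s y1)) has_integral (- C3)) {x0..x1}"
    using has_contour_integral_reverse_linepath[OF C3] has_contour_integral_linepath_same_Im_iff xy
    by (simp add: a3_def a4_def)
  moreover have "((\<lambda>t. h (Complex x0 t)) has_integral (\<i> * C4)) {y0..y1}"
    using has_contour_integral_reverse_linepath[OF C4] has_contour_integral_linepath_same_Re_iff xy
    by (simp add: a1_def a4_def)
  ultimately show ?thesis
    by (intro that[of C1 "- \<i> * C2" "- C3" "\<i> * C4"]) (simp_all add: algebra_simps)
qed

lemma Cauchy_rectangle_norm_le_sides:
  fixes g :: "complex \<Rightarrow> complex"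
  assumes holg: "g holomorphic_on S" and S: "open S" "convex S"
    and rect: "cbox (Complex x0 y0) (Complex x1 y1) \<subseteq> S"
    and z: "z \<in> box (Complex x0 y0) (Complex x1 y1)"
  obtains I1 I2 I3 I4 where
    "((\<lambda>s. g (Complex s y0) / (Complex s y0 - z)) has_integral I1) {x0..x1}"
    "((\<lambda>t. g (Complex x1 t) / (Complex x1 t - z)) has_integral I2) {y0..y1}"
    "((\<lambda>s. g (Complex s y1) / (Complex s y1 - z)) has_integral I3) {x0..x1}"
    "((\<lambda>t. g (Complex x0 t) / (Complex x0 t - z)) has_integral I4) {y0..y1}"
    "2 * pi * norm (g z) \<le> norm I1 + norm I2 + norm I3 + norm I4"
proof -
  let ?\<gamma> = "rectpath (Complex x0 y0) (Complex x1 y1)"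
  have xy: "x0 < x1" "y0 < y1"
    using z by (auto simp: in_box_complex_iff)
  have pim: "path_image ?\<gamma> \<subseteq> S - {z}"
    using path_image_rectpath_cbox_minus_box[of "Complex x0 y0" "Complex x1 y1"] xy rect z by auto
  have "z \<in> interior S"
    using z rect box_subset_cbox interior_open[OF S(1)] by blast
  then have "((\<lambda>w. g w / (w - z)) has_contour_integral (2 * pi * \<i> * g z)) ?\<gamma>"
    using Cauchy_integral_formula_convex_simple[OF S(2) holg _ valid_path_rectpath pim]
      winding_number_rectpath[OF z] by simp
  moreover have "continuous_on (path_image ?\<gamma>) (\<lambda>w. g w / (w - z))"
    using pim by (intro continuous_intros continuous_on_subset[OF holomorphic_on_imp_continuous_on[OF holg]]) auto
  ultimately obtain I1 I2 I3 I4 where sides: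
    "((\<lambda>s. g (Complex s y0) / (Complex s y0 - z)) has_integral I1) {x0..x1}"
    "((\<lambda>t. g (Complex x1 t) / (Complex x1 t - z)) has_integral I2) {y0..y1}"
    "((\<lambda>s. g (Complex s y1) / (Complex s y1 - z)) has_integral I3) {x0..x1}"
    "((\<lambda>t. g (Complex x0 t) / (Complex x0 t - z)) has_integral I4) {y0..y1}"
    and sum: "2 * pi * \<i> * g z = I1 + \<i> * I2 - I3 - \<i> * I4"
    by (rule has_contour_integral_rectpath_sides[OF _ _ xy]) blast+
  have "2 * pi * norm (g z) = norm (I1 + \<i> * I2 - I3 - \<i> * I4)"
    by (simp flip: sum add: norm_mult)
  also have "\<dots> \<le> norm I1 + norm I2 + norm I3 + norm I4"
    using norm_triangle_ineq4[of "I1 + \<i> * I2 - I3" "\<i> * I4"] norm_triangle_ineq4[of "I1 + \<i> * I2" I3]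
      norm_triangle_ineq[of I1 "\<i> * I2"] by (simp add: norm_mult)
  finally show ?thesis using sides that by blast
qed

lemma norm_le_weighted_side_norms:
  fixes F :: "complex \<Rightarrow> complex"
  assumes holF: "F holomorphic_on {w. 0 < Re w}" and r: "0 < r" "r < x" and T: "r \<le> T"
  shows "ennreal (2 * pi * norm (F (Complex x y)))
           \<le> ennreal (exp (r^2 + pi^2/4 + pi * \<bar>y\<bar>) / r) *
             (weighted_hseg_norm F (x - r) (x + r) (y - T) + weighted_vline_norm F (x + r) +
              weighted_hseg_norm F (x - r) (x + r) (y + T) + weighted_vline_norm F (x - r))"
proof -
  define z where "z = Complex x y"
  define E where "E = exp (r^2 + pi^2/4 + pi * \<bar>y\<bar>) / r"
  have contF: "continuous_on {w. 0 < Re w} F"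
    using holF holomorphic_on_imp_continuous_on by blast
  have "(\<lambda>w. F w * exp ((w - z)^2)) holomorphic_on {w. 0 < Re w}"
    by (intro holomorphic_intros holF)
  moreover have "cbox (Complex (x - r) (y - T)) (Complex (x + r) (y + T)) \<subseteq> {w. 0 < Re w}"
    using r by (auto simp: in_cbox_complex_iff)
  moreover have "z \<in> box (Complex (x - r) (y - T)) (Complex (x + r) (y + T))"
    using r T by (simp add: in_box_complex_iff z_def)
  ultimately obtain I1 I2 I3 I4 where sides:
    "((\<lambda>s. F (Complex s (y - T)) * exp ((Complex s (y - T) - z)^2) / (Complex s (y - T) - z))
       has_integral I1) {x - r..x + r}"
    "((\<lambda>t. F (Complex (x + r) t) * exp ((Complex (x + r) t - z)^2) / (Complex (x + r) t - z))
       has_integral I2) {y - T..y + T}"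
    "((\<lambda>s. F (Complex s (y + T)) * exp ((Complex s (y + T) - z)^2) / (Complex s (y + T) - z))
       has_integral I3) {x - r..x + r}"
    "((\<lambda>t. F (Complex (x - r) t) * exp ((Complex (x - r) t - z)^2) / (Complex (x - r) t - z))
       has_integral I4) {y - T..y + T}"
    and tri: "2 * pi * norm (F z * exp ((z - z)^2)) \<le> norm I1 + norm I2 + norm I3 + norm I4"
    by (rule Cauchy_rectangle_norm_le_sides[OF _ open_halfspace_Re_gt convex_halfspace_Re_gt])
  have "ennreal (norm I1) \<le> ennreal E * weighted_hseg_norm F (x - r) (x + r) (y - T)"
    using norm_horizontal_side_le[OF contF r _ sides(1)[unfolded z_def]] T by (simp add: E_def)
  moreover have "ennreal (norm I2) \<le> ennreal E * weighted_vline_norm F (x + r)"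
    using norm_vertical_side_le[OF contF _ _ r(1) sides(2)[unfolded z_def]] r by (simp add: E_def)
  moreover have "ennreal (norm I3) \<le> ennreal E * weighted_hseg_norm F (x - r) (x + r) (y + T)"
    using norm_horizontal_side_le[OF contF r _ sides(3)[unfolded z_def]] T by (simp add: E_def)
  moreover have "ennreal (norm I4) \<le> ennreal E * weighted_vline_norm F (x - r)"
    using norm_vertical_side_le[OF contF _ _ r(1) sides(4)[unfolded z_def]] r by (simp add: E_def)
  moreover have "ennreal (2 * pi * norm (F (Complex x y)))
                   \<le> ennreal (norm I1) + ennreal (norm I2) + ennreal (norm I3) + ennreal (norm I4)"
    using tri by (simp add: z_def ennreal_plus[symmetric] del: ennreal_plus)
  ultimately show ?thesis
    unfolding E_def distrib_left by (meson add_mono order_trans)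
qed

lemma norm_le_weighted_vline_norms:
  fixes F :: "complex \<Rightarrow> complex"
  assumes holF: "F holomorphic_on {w. 0 < Re w}" and r: "0 < r" "r < x"
    and lim: "(weighted_hseg_norm F (x - r) (x + r) \<longlongrightarrow> 0) at_top"
      "(weighted_hseg_norm F (x - r) (x + r) \<longlongrightarrow> 0) at_bot"
  shows "ennreal (2 * pi * norm (F (Complex x y)))
           \<le> ennreal (exp (r^2 + pi^2/4 + pi * \<bar>y\<bar>) / r) *
             (weighted_vline_norm F (x + r) + weighted_vline_norm F (x - r))"
proof -
  let ?E = "ennreal (exp (r^2 + pi^2/4 + pi * \<bar>y\<bar>) / r)"
  let ?H = "weighted_hseg_norm F (x - r) (x + r)"
  have up: "filterlim (\<lambda>T. y + T) at_top at_top"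
    by (rule filterlim_tendsto_add_at_top[OF tendsto_const filterlim_ident])
  have down: "filterlim (\<lambda>T. y - T) at_bot at_top"
    unfolding filterlim_uminus_at_bot
    using filterlim_tendsto_add_at_top[OF tendsto_const filterlim_ident, of "- y"] by simp
  have "((\<lambda>T. ?E * (?H (y - T) + weighted_vline_norm F (x + r) + ?H (y + T) + weighted_vline_norm F (x - r)))
          \<longlongrightarrow> ?E * (0 + weighted_vline_norm F (x + r) + 0 + weighted_vline_norm F (x - r))) at_top"
    by (intro tendsto_intros ennreal_tendsto_cmult filterlim_compose[OF lim(1) up]
          filterlim_compose[OF lim(2) down]) auto
  moreover have "\<forall>\<^sub>F T in at_top. ennreal (2 * pi * norm (F (Complex x y)))
      \<le> ?E * (?H (y - T) + weighted_vline_norm F (x + r) + ?H (y + T) + weighted_vline_norm F (x - r))"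
    using eventually_ge_at_top[of r] by eventually_elim (rule norm_le_weighted_side_norms[OF holF r])
  ultimately show ?thesis
    using tendsto_le[OF trivial_limit_at_top_linorder _ tendsto_const] by simp
qed

lemma norm_le_exp_pi_abs_Im:
  fixes F :: "complex \<Rightarrow> complex"
  assumes holF: "F holomorphic_on {w. 0 < Re w}" and r: "0 < r" and z: "2 * r \<le> Re z"
    and hseg: "\<And>a b. 0 < a \<Longrightarrow> a < b \<Longrightarrow>
      (weighted_hseg_norm F a b \<longlongrightarrow> 0) at_top \<and> (weighted_hseg_norm F a b \<longlongrightarrow> 0) at_bot"
    and vline: "\<And>p. r \<le> p \<Longrightarrow> weighted_vline_norm F p \<le> ennreal m" and m: "0 \<le> m"
  shows "norm (F z) \<le> exp (r^2 + pi^2/4) * m / (pi * r) * exp (pi * \<bar>Im z\<bar>)"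
proof -
  define E where "E = exp (r^2 + pi^2/4 + pi * \<bar>Im z\<bar>) / r"
  have "ennreal (2 * pi * norm (F z))
          \<le> ennreal E * (weighted_vline_norm F (Re z + r) + weighted_vline_norm F (Re z - r))"
    using norm_le_weighted_vline_norms[OF holF r, of "Re z" "Im z"] hseg[of "Re z - r" "Re z + r"] r z
    by (simp add: E_def)
  also have "\<dots> \<le> ennreal E * (ennreal m + ennreal m)"
    using r z by (intro mult_left_mono add_mono vline) auto
  also have "\<dots> = ennreal E * ennreal (2 * m)"
    using m by (metis ennreal_plus mult_2)
  also have "\<dots> = ennreal (E * (2 * m))"
    using r by (intro ennreal_mult'[symmetric]) (simp add: E_def)
  finally have "2 * pi * norm (F z) \<le> E * (2 * m)"
    using m r by (subst (asm) ennreal_le_iff) (auto simp: E_def)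
  moreover have "E = exp (r^2 + pi^2/4) * exp (pi * \<bar>Im z\<bar>) / r"
    by (simp add: E_def exp_add)
  ultimately show ?thesis
    using r by (simp add: field_simps)
qed

theorem lemma3p1:
  fixes \<Phi> :: "complex \<Rightarrow> complex" and \<delta> :: real
  assumes anal: "\<Phi> analytic_on {z. Re z > 0}"
    and a: "\<And>a b. 0 < a \<Longrightarrow> a < b \<Longrightarrow>
      ((\<lambda>y. ennreal (exp (- pi * \<bar>y\<bar>)) *
         (\<integral>\<^sup>+ x \<in> {a..b}. ennreal (norm (\<Phi> (Complex x y) / Complex x y)) \<partial>lborel))
        \<longlongrightarrow> 0) at_top
      \<and> ((\<lambda>y. ennreal (exp (- pi * \<bar>y\<bar>)) *
         (\<integral>\<^sup>+ x \<in> {a..b}. ennreal (norm (\<Phi> (Complex x y) / Complex x y)) \<partial>lborel))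
        \<longlongrightarrow> 0) at_bot"
    and b: "\<And>\<eta>. \<eta> > 0 \<Longrightarrow>
      (SUP x\<in>{\<eta>..}. \<integral>\<^sup>+ y. ennreal (norm (\<Phi> (Complex x y) / Complex x y) * exp (- pi * \<bar>y\<bar>)) \<partial>lborel) < \<infinity>"
    and c: "((\<lambda>x. \<integral>\<^sup>+ y. ennreal (norm (\<Phi> (Complex x y) / Complex x y) * exp (- pi * \<bar>y\<bar>)) \<partial>lborel)
        \<longlongrightarrow> 0) at_top"
    and \<delta>: "\<delta> > 0"
  shows "\<exists>C > 0. \<forall>z. Re z \<ge> \<delta> \<longrightarrow> norm (\<Phi> z) \<le> C * norm z * exp (pi * \<bar>Im z\<bar>)"
proof -
  define F where "F = (\<lambda>w. \<Phi> w / w)"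
  define r where "r = \<delta> / 2"
  have r: "0 < r" using \<delta> by (simp add: r_def)
  have holF: "F holomorphic_on {w. 0 < Re w}"
    unfolding F_def using analytic_imp_holomorphic[OF anal] by (intro holomorphic_intros) auto
  define m where "m = enn2real (SUP p\<in>{r..}. weighted_vline_norm F p)"
  have "(SUP p\<in>{r..}. weighted_vline_norm F p) < \<infinity>"
    using b[OF r] by (simp add: F_def weighted_vline_norm_def)
  then have vline: "weighted_vline_norm F p \<le> ennreal m" if "r \<le> p" for p
    unfolding m_def using that by (simp add: less_top SUP_upper)
  have hseg: "(weighted_hseg_norm F a b \<longlongrightarrow> 0) at_top \<and> (weighted_hseg_norm F a b \<longlongrightarrow> 0) at_bot"
    if "0 < a" "a < b" for a b
    using a[OF that] unfolding F_def weighted_hseg_norm_def[abs_def] by simp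
  define C where "C = exp (r^2 + pi^2/4) * m / (pi * r) + 1"
  have m: "0 \<le> m"
    by (simp add: m_def)
  have "C > 0"
    unfolding C_def using r m by (intro add_nonneg_pos) auto
  moreover have "norm (\<Phi> z) \<le> C * norm z * exp (pi * \<bar>Im z\<bar>)" if z: "\<delta> \<le> Re z" for z
  proof -
    have "norm (F z) \<le> exp (r^2 + pi^2/4) * m / (pi * r) * exp (pi * \<bar>Im z\<bar>)"
      using z by (intro norm_le_exp_pi_abs_Im[OF holF r _ hseg vline m]) (simp add: r_def)
    also have "\<dots> \<le> C * exp (pi * \<bar>Im z\<bar>)"
      by (intro mult_right_mono) (simp_all add: C_def)
    finally have "norm z * norm (F z) \<le> norm z * (C * exp (pi * \<bar>Im z\<bar>))"
      by (rule mult_left_mono) simp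
    moreover have "norm (\<Phi> z) = norm z * norm (F z)"
      using z \<delta> by (auto simp: F_def norm_divide)
    ultimately show ?thesis by (simp add: mult_ac)
  qed
  ultimately show ?thesis by blast
qed

end
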